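(* Let $f(X,I)=f_0(I)+f_1(I)X+f_2(I)X^2$ with $f_0,f_1,f_2$ smooth on $[0,\infty)$, and consider the planar system $\dot X=f(X,I)$, $\dot I=(X-1)I$. Let $\beta=(\beta_1,\beta_2)$ be $f$-compatible and let $\mathcal{T}(\beta)$ be the closed triangle in the $(X,I)$-plane with vertices $(\beta_2,0)$, $(\beta_1,0)$, $(0,1)$. Then there exist no periodic solutions, homoclinic loops or oriented phase polygons of this system contained in the interior $\mathcal{T}(\beta)\setminus\partial\mathcal{T}(\beta)$.
   Context: Put $\lambda:=f_0(1)$, $P_f(I):=(f_0(I)-\lambda I)/(1-I)$ (smoothly extended to $I=1$), $h_f(z,I):=P_f(I)+zf_1(I)+z^2(I+(1-I)f_2(I))$. A pair $\beta=(\beta_1,\beta_2)$ with $\beta_1>\beta_2$ is called $f$-compatible if $\beta_2\le\lambda\le\beta_1$ and $h_f(\beta_i,I)/(\beta_j-\beta_i)\ge0$ for all $I\in[0,1]$ and $\{i,j\}=\{1,2\}$. *)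

theory Defs
  imports "HOL-Analysis.Analysis"
begin

definition smooth_on_nonneg :: "(real \<Rightarrow> real) \<Rightarrow> bool" where
  "smooth_on_nonneg g \<longleftrightarrow> (\<exists>D :: nat \<Rightarrow> real \<Rightarrow> real.
      (\<forall>x\<ge>0. D 0 x = g x) \<and>
      (\<forall>n. \<forall>x\<ge>0. (D n has_real_derivative D (Suc n) x) (at x within {0..})))"

definition fpoly :: "(real \<Rightarrow> real) \<Rightarrow> (real \<Rightarrow> real) \<Rightarrow> (real \<Rightarrow> real) \<Rightarrow> real \<Rightarrow> real \<Rightarrow> real" where
  "fpoly f0 f1 f2 X I = f0 I + f1 I * X + f2 I * X^2"

definition vfield :: "(real \<Rightarrow> real) \<Rightarrow> (real \<Rightarrow> real) \<Rightarrow> (real \<Rightarrow> real) \<Rightarrow> real \<times> real \<Rightarrow> real \<times> real" where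
  "vfield f0 f1 f2 z = (fpoly f0 f1 f2 (fst z) (snd z), (fst z - 1) * snd z)"

definition lam :: "(real \<Rightarrow> real) \<Rightarrow> real" where
  "lam f0 = f0 1"

text \<open>P_f(I) = (f0 I - \<lambda> I)/(1 - I), extended smoothly (continuously) to I = 1,
  where its value is the limit \<lambda> - f0'(1).\<close>
definition Pf :: "(real \<Rightarrow> real) \<Rightarrow> real \<Rightarrow> real" where
  "Pf f0 I = (if I = 1 then lam f0 - deriv f0 1 else (f0 I - lam f0 * I) / (1 - I))"

definition hf :: "(real \<Rightarrow> real) \<Rightarrow> (real \<Rightarrow> real) \<Rightarrow> (real \<Rightarrow> real) \<Rightarrow> real \<Rightarrow> real \<Rightarrow> real" where
  "hf f0 f1 f2 z I = Pf f0 I + z * f1 I + z^2 * (I + (1 - I) * f2 I)"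

definition f_compatible :: "(real \<Rightarrow> real) \<Rightarrow> (real \<Rightarrow> real) \<Rightarrow> (real \<Rightarrow> real) \<Rightarrow> real \<times> real \<Rightarrow> bool" where
  "f_compatible f0 f1 f2 \<beta> \<longleftrightarrow>
     fst \<beta> > snd \<beta> \<and> snd \<beta> \<le> lam f0 \<and> lam f0 \<le> fst \<beta> \<and>
     (\<forall>I\<in>{0..1}. hf f0 f1 f2 (fst \<beta>) I / (snd \<beta> - fst \<beta>) \<ge> 0 \<and>
                  hf f0 f1 f2 (snd \<beta>) I / (fst \<beta> - snd \<beta>) \<ge> 0)"

definition triangle :: "real \<times> real \<Rightarrow> (real \<times> real) set" where
  "triangle \<beta> = convex hull {(snd \<beta>, 0), (fst \<beta>, 0), (0, 1)}"

definition is_solution :: "(real \<times> real \<Rightarrow> real \<times> real) \<Rightarrow> (real \<Rightarrow> real \<times> real) \<Rightarrow> bool" where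
  "is_solution F \<gamma> \<longleftrightarrow> (\<forall>t. (\<gamma> has_vector_derivative F (\<gamma> t)) (at t))"

definition equilibrium :: "(real \<times> real \<Rightarrow> real \<times> real) \<Rightarrow> real \<times> real \<Rightarrow> bool" where
  "equilibrium F p \<longleftrightarrow> F p = 0"

definition periodic_solution :: "(real \<times> real \<Rightarrow> real \<times> real) \<Rightarrow> (real \<Rightarrow> real \<times> real) \<Rightarrow> bool" where
  "periodic_solution F \<gamma> \<longleftrightarrow> is_solution F \<gamma> \<and> (\<exists>T>0. \<forall>t. \<gamma> (t + T) = \<gamma> t) \<and>
     (\<exists>s t. \<gamma> s \<noteq> \<gamma> t)"

definition connecting_orbit :: "(real \<times> real \<Rightarrow> real \<times> real) \<Rightarrow> (real \<Rightarrow> real \<times> real) \<Rightarrow> real \<times> real \<Rightarrow> real \<times> real \<Rightarrow> bool" where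
  "connecting_orbit F \<gamma> p q \<longleftrightarrow> is_solution F \<gamma> \<and> equilibrium F p \<and> equilibrium F q \<and>
     (\<exists>s t. \<gamma> s \<noteq> \<gamma> t) \<and> (\<gamma> \<longlongrightarrow> p) at_bot \<and> (\<gamma> \<longlongrightarrow> q) at_top"

definition homoclinic_loop :: "(real \<times> real \<Rightarrow> real \<times> real) \<Rightarrow> (real \<times> real) set \<Rightarrow> bool" where
  "homoclinic_loop F S \<longleftrightarrow> (\<exists>\<gamma> p. connecting_orbit F \<gamma> p p \<and> S = insert p (range \<gamma>))"

definition oriented_phase_polygon :: "(real \<times> real \<Rightarrow> real \<times> real) \<Rightarrow> (real \<times> real) set \<Rightarrow> bool" where
  "oriented_phase_polygon F S \<longleftrightarrow> (\<exists>n::nat. \<exists>p :: nat \<Rightarrow> real \<times> real. \<exists>\<gamma> :: nat \<Rightarrow> real \<Rightarrow> real \<times> real.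
      n \<ge> 2 \<and> inj_on p {..<n} \<and>
      (\<forall>i<n. connecting_orbit F (\<gamma> i) (p i) (p (Suc i mod n))) \<and>
      S = p ` {..<n} \<union> (\<Union>i<n. range (\<gamma> i)))"

end

theory Submission
  imports Defs
begin

text \<open>In the coordinates \<open>c = 1/(1 - I)\<close> and \<open>Z = X/(1 - I)\<close> the open triangle becomes
  the half-strip \<open>b\<^sub>2 < Z < b\<^sub>1\<close>, \<open>c > 1\<close>, and the flow reads \<open>c' = (c - 1)(Z - c)\<close>,
  \<open>Z' = zvel I Z\<close>, a quadratic polynomial in \<open>Z\<close>. Compatibility of \<open>\<beta>\<close> means that the
  flow enters the triangle across the edges \<open>Z = b\<^sub>2\<close> and \<open>Z = b\<^sub>1\<close>; by
  Lagrange interpolation at \<open>b\<^sub>2, b\<^sub>1\<close> this makes \<open>R I Z = \<Lambda>'(Z) Z' / (c - 1) - \<Lambda>(Z)\<close>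
  strictly decreasing in \<open>Z\<close>, where \<open>\<Lambda>(Z) = ln (Z - b\<^sub>2) - ln (b\<^sub>1 - Z)\<close>.
  Where moreover \<open>b\<^sub>2 < c < b\<^sub>1\<close>, the function \<open>V = G(c) - M(Z) + c \<Lambda>(Z)\<close> with
  \<open>M' = Z \<Lambda>'\<close> and \<open>G'(c) = R I c\<close> (at the level \<open>I\<close> of \<open>c\<close>) has derivative
  \<open>(c - 1)(Z - c)(R I c - R I Z) \<ge> 0\<close> along the flow, with equality only on the line
  \<open>X = 1\<close>. Periodic and connecting orbits in the triangle stay in that region, since equilibria lie on \<open>X = 1\<close>
  and so do the extrema of \<open>I\<close> along an orbit. Hence \<open>V\<close> is constant on a periodic orbit,
  forcing it to be an equilibrium, and strictly increases along every connecting orbit, which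
  rules out closed chains of them.\<close>

lemma smooth_on_nonneg_continuous_on:
  assumes "smooth_on_nonneg g"
  shows "continuous_on {0..} g"
proof -
  obtain D where D0: "\<forall>x\<ge>0. D 0 x = g x"
    and D: "\<forall>n. \<forall>x\<ge>0. (D n has_real_derivative D (Suc n) x) (at x within {0..})"
    using assms unfolding smooth_on_nonneg_def by blast
  have "continuous_on {0..} (D 0)"
    by (rule DERIV_continuous_on) (use D in auto)
  then show ?thesis
    by (rule continuous_on_eq) (use D0 in auto)
qed

lemma is_solution_continuous_on:
  "is_solution F \<gamma> \<Longrightarrow> continuous_on UNIV \<gamma>"
  unfolding is_solution_def
  by (blast intro: continuous_at_imp_continuous_on has_vector_derivative_continuous)

lemma is_solution_has_real_derivative:
  assumes "is_solution F \<gamma>"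
  shows "((\<lambda>t. fst (\<gamma> t)) has_real_derivative fst (F (\<gamma> t))) (at t)"
    and "((\<lambda>t. snd (\<gamma> t)) has_real_derivative snd (F (\<gamma> t))) (at t)"
proof -
  have d: "(\<gamma> has_derivative (\<lambda>h. h *\<^sub>R F (\<gamma> t))) (at t)"
    using assms unfolding is_solution_def has_vector_derivative_def by blast
  show "((\<lambda>t. fst (\<gamma> t)) has_real_derivative fst (F (\<gamma> t))) (at t)"
    by (rule has_derivative_imp_has_field_derivative[OF has_derivative_fst[OF d]]) simp
  show "((\<lambda>t. snd (\<gamma> t)) has_real_derivative snd (F (\<gamma> t))) (at t)"
    by (rule has_derivative_imp_has_field_derivative[OF has_derivative_snd[OF d]]) simp
qed

lemma continuous_on_Pf:
  assumes "continuous_on {0<..<1} f0"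
  shows "continuous_on {0<..<1} (Pf f0)"
proof -
  have "continuous_on {0<..<1} (\<lambda>I. (f0 I - lam f0 * I) / (1 - I))"
    by (intro continuous_intros assms) auto
  then show ?thesis
    by (rule continuous_on_eq) (auto simp: Pf_def)
qed

lemma quadratic_partial_fractions:
  fixes a b z p q s :: real
  assumes "z \<noteq> a" "z \<noteq> b"
  shows "(1 / (z - a) + 1 / (b - z)) * (p + q * z + s * z^2)
    = (p + q * a + s * a^2) / (z - a) + (p + q * b + s * b^2) / (b - z) - s * (b - a)"
proof -
  have "z - a \<noteq> 0" "b - z \<noteq> 0" using assms by auto
  then show ?thesis by (simp add: divide_simps) (simp add: algebra_simps power2_eq_square)
qed

lemma periodic_add_of_int_mult:
  assumes "\<And>t. g (t + T) = g t"
  shows "g (t + of_int k * T) = g t"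
proof (induction k arbitrary: t rule: int_induct[where k = 0])
  case (step1 i)
  then show ?case using assms[of "t + of_int i * T"] by (simp add: algebra_simps)
next
  case (step2 i)
  then show ?case using assms[of "t + of_int (i - 1) * T"] by (simp add: algebra_simps)
qed simp

lemma periodic_continuous_attains_inf:
  fixes g :: "real \<Rightarrow> real"
  assumes cont: "continuous_on UNIV g" and "0 < T" and per: "\<And>t. g (t + T) = g t"
  shows "\<exists>s. \<forall>t. g s \<le> g t"
proof -
  have "{0..T} \<noteq> {}" using \<open>0 < T\<close> by simp
  then obtain s where s: "\<And>t. t \<in> {0..T} \<Longrightarrow> g s \<le> g t"
    using continuous_attains_inf[OF compact_Icc _ continuous_on_subset[OF cont subset_UNIV]] by blast
  have "g s \<le> g t" for t
  proof -
    define k where "k = \<lfloor>t / T\<rfloor>"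
    have "of_int k * T \<le> t" "t \<le> of_int k * T + T"
      using floor_divide_lower[OF \<open>0 < T\<close>, of t] floor_divide_upper[OF \<open>0 < T\<close>, of t]
      by (simp_all add: k_def distrib_right)
    then have "g s \<le> g (t - of_int k * T)" by (intro s) auto
    also have "\<dots> = g t" using periodic_add_of_int_mult[of g T, OF per, of "t - of_int k * T" k] by simp
    finally show ?thesis .
  qed
  then show ?thesis by blast
qed

lemma periodic_continuous_attains_sup:
  fixes g :: "real \<Rightarrow> real"
  assumes "continuous_on UNIV g" and "0 < T" and "\<And>t. g (t + T) = g t"
  shows "\<exists>s. \<forall>t. g t \<le> g s"
proof -
  have "continuous_on UNIV (\<lambda>t. - g t)"
    using assms(1) by (rule continuous_on_minus)
  then show ?thesis
    using periodic_continuous_attains_inf[of "\<lambda>t. - g t" T] assms(2,3) by simp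
qed

lemma periodic_mono_imp_constant:
  fixes g :: "real \<Rightarrow> 'a::order"
  assumes "mono g" and "0 < T" and per: "\<And>t. g (t + T) = g t"
  shows "g s = g t"
proof -
  have "g b \<le> g a" for a b
  proof -
    define k where "k = \<lceil>(b - a) / T\<rceil>"
    have "b \<le> a + of_int k * T"
      using ceiling_divide_upper[OF \<open>0 < T\<close>, of "b - a"] by (simp add: k_def)
    then have "g b \<le> g (a + of_int k * T)" by (rule monoD[OF \<open>mono g\<close>])
    then show ?thesis by (simp add: periodic_add_of_int_mult[of g T, OF per])
  qed
  then show ?thesis by (meson order_antisym)
qed

lemma continuous_attains_inf_below_limits:
  fixes g :: "real \<Rightarrow> real"
  assumes cont: "continuous_on UNIV g" and lim_bot: "(g \<longlongrightarrow> a) at_bot"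
    and lim_top: "(g \<longlongrightarrow> b) at_top" and "g t < a" "g t < b"
  shows "\<exists>s. \<forall>r. g s \<le> g r"
proof -
  obtain N1 where N1: "\<And>r. r \<le> N1 \<Longrightarrow> g t < g r"
    using order_tendstoD(1)[OF lim_bot \<open>g t < a\<close>] by (auto simp: eventually_at_bot_linorder)
  obtain N2 where N2: "\<And>r. N2 \<le> r \<Longrightarrow> g t < g r"
    using order_tendstoD(1)[OF lim_top \<open>g t < b\<close>] by (auto simp: eventually_at_top_linorder)
  define K where "K = {min N1 t .. max N2 t}"
  have "t \<in> K" "compact K" by (simp_all add: K_def)
  then obtain s where s: "s \<in> K" "\<And>r. r \<in> K \<Longrightarrow> g s \<le> g r"
    using continuous_attains_inf[of K g] continuous_on_subset[OF cont] by blast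
  have "g s \<le> g r" for r
  proof (cases "r \<in> K")
    case False
    then have "g t < g r" using N1 N2 by (force simp: K_def)
    then show ?thesis using s(2)[OF \<open>t \<in> K\<close>] by linarith
  qed (use s in auto)
  then show ?thesis by blast
qed

lemma continuous_attains_sup_above_limits:
  fixes g :: "real \<Rightarrow> real"
  assumes "continuous_on UNIV g" and "(g \<longlongrightarrow> a) at_bot"
    and "(g \<longlongrightarrow> b) at_top" and "a < g t" "b < g t"
  shows "\<exists>s. \<forall>r. g r \<le> g s"
  using continuous_attains_inf_below_limits[of "\<lambda>t. - g t" "- a" "- b" t] assms
  by (simp add: continuous_on_minus tendsto_minus)

lemma no_increasing_cycle:
  fixes h :: "nat \<Rightarrow> 'a::linorder"
  assumes "0 < n" and step: "\<And>i. i < n \<Longrightarrow> h i < h (Suc i mod n)"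
  shows False
proof -
  have "Max (h ` {..<n}) \<in> h ` {..<n}"
    using \<open>0 < n\<close> by (intro Max_in) auto
  then obtain i where "i < n" and i: "h i = Max (h ` {..<n})" by auto
  have "h (Suc i mod n) \<le> h i"
    unfolding i using \<open>0 < n\<close> by (intro Max_ge) auto
  then show False using step[OF \<open>i < n\<close>] by simp
qed

locale compatible_triangle =
  fixes f0 f1 f2 :: "real \<Rightarrow> real" and b1 b2 :: real
  assumes continuous_f0: "continuous_on {0<..<1} f0"
    and continuous_f1: "continuous_on {0<..<1} f1"
    and continuous_f2: "continuous_on {0<..<1} f2"
    and b2_less_b1: "b2 < b1" and b2_le_lam: "b2 \<le> lam f0" and lam_le_b1: "lam f0 \<le> b1"
    and hf_b1_nonpos: "\<And>I. 0 < I \<Longrightarrow> I < 1 \<Longrightarrow> hf f0 f1 f2 b1 I \<le> 0"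
    and hf_b2_nonneg: "\<And>I. 0 < I \<Longrightarrow> I < 1 \<Longrightarrow> 0 \<le> hf f0 f1 f2 b2 I"
begin

abbreviation F :: "real \<times> real \<Rightarrow> real \<times> real" where
  "F \<equiv> vfield f0 f1 f2"

definition ccoord :: "real \<times> real \<Rightarrow> real" where
  "ccoord p = 1 / (1 - snd p)"

definition zcoord :: "real \<times> real \<Rightarrow> real" where
  "zcoord p = fst p / (1 - snd p)"

definition open_triangle :: "(real \<times> real) set" where
  "open_triangle = {p. 0 < snd p \<and> snd p < 1 \<and> b2 < zcoord p \<and> zcoord p < b1}"

text \<open>The points whose horizontal line meets \<open>X = 1\<close> inside the triangle.\<close>
definition V_domain :: "(real \<times> real) set" where
  "V_domain = {p \<in> open_triangle. b2 < ccoord p \<and> ccoord p < b1}"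

definition zvel :: "real \<Rightarrow> real \<Rightarrow> real" where
  "zvel y z = hf f0 f1 f2 z y + (lam f0 - z) * (y / (1 - y))"

definition phi :: "real \<Rightarrow> real" where
  "phi z = 1 / (z - b2) + 1 / (b1 - z)"

definition Lambda :: "real \<Rightarrow> real" where
  "Lambda z = ln (z - b2) - ln (b1 - z)"

definition M :: "real \<Rightarrow> real" where
  "M z = b2 * ln (z - b2) - b1 * ln (b1 - z)"

definition R :: "real \<Rightarrow> real \<Rightarrow> real" where
  "R y z = phi z * zvel y z / (y / (1 - y)) - Lambda z"

text \<open>\<open>1 - 1/c\<close> is the level \<open>I\<close> at which \<open>ccoord = c\<close>.\<close>
definition r :: "real \<Rightarrow> real" where
  "r c = R (1 - 1 / c) c"

definition G :: "real \<Rightarrow> real" where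
  "G = (SOME G. \<forall>c\<in>{max 1 b2<..<b1}. (G has_real_derivative r c) (at c))"

definition V :: "real \<times> real \<Rightarrow> real" where
  "V p = G (ccoord p) - M (zcoord p) + ccoord p * Lambda (zcoord p)"

definition Vdot :: "real \<times> real \<Rightarrow> real" where
  "Vdot p = (ccoord p - 1) * (zcoord p - ccoord p) * (r (ccoord p) - R (snd p) (zcoord p))"

lemma interior_triangle_subset: "interior (triangle (b1, b2)) \<subseteq> open_triangle"
proof
  fix p assume p: "p \<in> interior (triangle (b1, b2))"
  define H where "H = {p. (0::real, -1::real) \<bullet> p \<le> 0} \<inter> {p. (-1, -b2) \<bullet> p \<le> -b2}
    \<inter> {p. (1, b1) \<bullet> p \<le> b1}"
  have "triangle (b1, b2) \<subseteq> H"
    unfolding triangle_def H_def using b2_less_b1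
    by (intro hull_minimal convex_Int convex_halfspace_le) (auto simp: inner_Pair)
  then have "p \<in> interior H" using p interior_mono by blast
  also have "interior H = {p. (0::real, -1::real) \<bullet> p < 0} \<inter> {p. (-1, -b2) \<bullet> p < -b2}
    \<inter> {p. (1, b1) \<bullet> p < b1}"
    unfolding H_def interior_Int by (subst (1 2 3) interior_halfspace_le) (auto simp: zero_prod_def)
  finally obtain x y where "p = (x, y)" "0 < y" "b2 * (1 - y) < x" "x < b1 * (1 - y)"
    by (cases p) (auto simp: inner_Pair algebra_simps)
  moreover from this have "0 < 1 - y"
    using b2_less_b1 by (smt (verit) mult_le_cancel_right)
  ultimately show "p \<in> open_triangle"
    by (auto simp: open_triangle_def zcoord_def pos_less_divide_eq pos_divide_less_eq)
qed

lemma V_domain_if_fst_eq_1: "p \<in> open_triangle \<Longrightarrow> fst p = 1 \<Longrightarrow> p \<in> V_domain"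
  by (auto simp: V_domain_def open_triangle_def zcoord_def ccoord_def)

lemma V_domain_between:
  assumes "p \<in> open_triangle" "a \<in> V_domain" "b \<in> V_domain" "snd a \<le> snd p" "snd p \<le> snd b"
  shows "p \<in> V_domain"
proof -
  have "0 < 1 - snd b" "0 < 1 - snd a" using assms(2,3) by (auto simp: V_domain_def open_triangle_def)
  then have "ccoord a \<le> ccoord p" "ccoord p \<le> ccoord b"
    using assms(4,5) unfolding ccoord_def by (auto intro!: divide_left_mono mult_pos_pos)
  then show ?thesis using assms(1-3) by (auto simp: V_domain_def)
qed

lemma ccoord_has_real_derivative:
  assumes sol: "is_solution F \<gamma>" and "snd (\<gamma> t) \<noteq> 1"
  shows "((\<lambda>s. ccoord (\<gamma> s)) has_real_derivative
           (ccoord (\<gamma> t) - 1) * (zcoord (\<gamma> t) - ccoord (\<gamma> t))) (at t)"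
proof -
  obtain x y where xy: "\<gamma> t = (x, y)" by fastforce
  have "1 - y \<noteq> 0" using assms(2) xy by simp
  have "((\<lambda>s. 1 / (1 - snd (\<gamma> s))) has_real_derivative (x - 1) * y / (1 - y)^2) (at t)"
    using is_solution_has_real_derivative(2)[OF sol, of t] \<open>1 - y \<noteq> 0\<close> xy
    by (auto intro!: derivative_eq_intros simp: vfield_def power2_eq_square)
  moreover have "(x - 1) * y / (1 - y)^2 = (1 / (1 - y) - 1) * (x / (1 - y) - 1 / (1 - y))"
    using \<open>1 - y \<noteq> 0\<close> by (simp add: divide_simps) (simp add: algebra_simps power2_eq_square)
  ultimately show ?thesis by (simp add: ccoord_def zcoord_def xy)
qed

lemma zcoord_has_real_derivative:
  assumes sol: "is_solution F \<gamma>" and "snd (\<gamma> t) \<noteq> 1"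
  shows "((\<lambda>s. zcoord (\<gamma> s)) has_real_derivative zvel (snd (\<gamma> t)) (zcoord (\<gamma> t))) (at t)"
proof -
  obtain x y where xy: "\<gamma> t = (x, y)" by fastforce
  have "1 - y \<noteq> 0" and "y \<noteq> 1" using assms(2) xy by simp_all
  have "((\<lambda>s. fst (\<gamma> s) / (1 - snd (\<gamma> s))) has_real_derivative
      (fpoly f0 f1 f2 x y * (1 - y) + x * ((x - 1) * y)) / (1 - y)^2) (at t)"
    using is_solution_has_real_derivative[OF sol, of t] \<open>1 - y \<noteq> 0\<close> xy
    by (auto intro!: derivative_eq_intros simp: vfield_def power2_eq_square)
  moreover have "(fpoly f0 f1 f2 x y * (1 - y) + x * ((x - 1) * y)) / (1 - y)^2 = zvel y (x / (1 - y))"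
    using \<open>1 - y \<noteq> 0\<close> \<open>y \<noteq> 1\<close>
    by (simp add: zvel_def hf_def Pf_def fpoly_def divide_simps) (simp add: algebra_simps power2_eq_square)
  ultimately show ?thesis by (simp add: zcoord_def xy)
qed

lemma zvel_quadratic:
  "zvel y z = (Pf f0 y + lam f0 * (y / (1 - y))) + (f1 y - y / (1 - y)) * z
    + (y + (1 - y) * f2 y) * z^2"
proof -
  have "hf f0 f1 f2 z y + (l - z) * u = (Pf f0 y + l * u) + (f1 y - u) * z + (y + (1 - y) * f2 y) * z^2"
    for l u
    by (simp add: hf_def algebra_simps)
  then show ?thesis unfolding zvel_def .
qed

lemma zvel_b2_nonneg: "0 < y \<Longrightarrow> y < 1 \<Longrightarrow> 0 \<le> zvel y b2"
  using hf_b2_nonneg[of y] b2_le_lam by (simp add: zvel_def)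

lemma zvel_b1_nonpos:
  assumes "0 < y" "y < 1"
  shows "zvel y b1 \<le> 0"
proof -
  have "(lam f0 - b1) * (y / (1 - y)) \<le> 0"
    using assms lam_le_b1 by (intro mult_nonpos_nonneg) auto
  then show ?thesis using hf_b1_nonpos[OF assms] by (simp add: zvel_def)
qed

lemma R_eq_partial_fractions:
  assumes "b2 < z" "z < b1"
  shows "R y z = (zvel y b2 / (z - b2) + zvel y b1 / (b1 - z) - (y + (1 - y) * f2 y) * (b1 - b2))
    / (y / (1 - y)) - Lambda z"
  using quadratic_partial_fractions[of z b2 b1 "Pf f0 y + lam f0 * (y / (1 - y))"
      "f1 y - y / (1 - y)" "y + (1 - y) * f2 y"] assms
  by (simp add: R_def phi_def zvel_quadratic[of y])

lemma R_strict_antimono: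
  assumes "0 < y" "y < 1" "b2 < z" "z < z'" "z' < b1"
  shows "R y z' < R y z"
proof -
  have "zvel y b2 / (z' - b2) \<le> zvel y b2 / (z - b2)"
    using zvel_b2_nonneg assms by (intro divide_left_mono) auto
  moreover have "zvel y b1 / (b1 - z') \<le> zvel y b1 / (b1 - z)"
    using zvel_b1_nonpos assms by (intro divide_left_mono_neg) auto
  ultimately have "(zvel y b2 / (z' - b2) + zvel y b1 / (b1 - z') - (y + (1 - y) * f2 y) * (b1 - b2))
      / (y / (1 - y))
    \<le> (zvel y b2 / (z - b2) + zvel y b1 / (b1 - z) - (y + (1 - y) * f2 y) * (b1 - b2)) / (y / (1 - y))"
    using assms by (intro divide_right_mono) auto
  moreover have "ln (z - b2) < ln (z' - b2)" "ln (b1 - z') < ln (b1 - z)"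
    using assms by simp_all
  then have "Lambda z < Lambda z'"
    by (simp add: Lambda_def)
  ultimately show ?thesis
    using assms by (simp add: R_eq_partial_fractions)
qed

lemma continuous_on_r: "continuous_on {max 1 b2<..<b1} r"
proof -
  have y: "continuous_on {max 1 b2<..<b1} (\<lambda>c. 1 - 1 / c)"
    "(\<lambda>c. 1 - 1 / c) ` {max 1 b2<..<b1} \<subseteq> {0<..<1}"
    by (auto intro!: continuous_intros)
  have "continuous_on {max 1 b2<..<b1} (\<lambda>c. Pf f0 (1 - 1 / c))"
    "continuous_on {max 1 b2<..<b1} (\<lambda>c. f1 (1 - 1 / c))"
    "continuous_on {max 1 b2<..<b1} (\<lambda>c. f2 (1 - 1 / c))"
    using continuous_on_Pf[OF continuous_f0] continuous_f1 continuous_f2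
    by (auto intro: continuous_on_compose2[OF _ y])
  then show ?thesis
    unfolding r_def R_def zvel_def hf_def phi_def Lambda_def
    by (intro continuous_intros) auto
qed

lemma G_has_real_derivative:
  assumes "c \<in> {max 1 b2<..<b1}"
  shows "(G has_real_derivative r c) (at c)"
proof -
  obtain H where "\<forall>x. ereal (max 1 b2) < x \<longrightarrow> x < ereal b1 \<longrightarrow> (H has_vector_derivative r x) (at x)"
    using einterval_antiderivative[of "ereal (max 1 b2)" "ereal b1" r] assms
      continuous_on_r[unfolded continuous_on_eq_continuous_at[OF open_greaterThanLessThan]]
    by auto
  then have "\<exists>G. \<forall>c\<in>{max 1 b2<..<b1}. (G has_real_derivative r c) (at c)"
    by (intro exI[of _ H]) (auto simp: has_real_derivative_iff_has_vector_derivative)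
  then have "\<forall>c\<in>{max 1 b2<..<b1}. (G has_real_derivative r c) (at c)"
    unfolding G_def by (rule someI_ex)
  then show ?thesis using assms by blast
qed

lemma V_domainD:
  assumes "p \<in> V_domain"
  shows "0 < snd p" "snd p < 1" "b2 < zcoord p" "zcoord p < b1" "ccoord p \<in> {max 1 b2<..<b1}"
proof -
  show "0 < snd p" "snd p < 1" "b2 < zcoord p" "zcoord p < b1"
    using assms by (auto simp: V_domain_def open_triangle_def)
  then have "1 < ccoord p" by (simp add: ccoord_def)
  then show "ccoord p \<in> {max 1 b2<..<b1}" using assms by (auto simp: V_domain_def)
qed

lemma Vdot_pos:
  assumes "p \<in> V_domain" "fst p \<noteq> 1"
  shows "0 < Vdot p"
proof -
  note p = V_domainD[OF assms(1)]
  define c Z where "c = ccoord p" and "Z = zcoord p"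
  have "r c = R (snd p) c" using p by (simp add: r_def c_def ccoord_def)
  have "Z \<noteq> c" using assms(2) p by (auto simp: Z_def c_def zcoord_def ccoord_def)
  have "0 < (Z - c) * (R (snd p) c - R (snd p) Z)"
  proof (cases "Z < c")
    case True
    then have "R (snd p) c < R (snd p) Z" using p by (intro R_strict_antimono) (auto simp: c_def Z_def)
    then show ?thesis using True by (simp add: mult_neg_neg)
  next
    case False
    then have "c < Z" using \<open>Z \<noteq> c\<close> by simp
    then have "R (snd p) Z < R (snd p) c" using p by (intro R_strict_antimono) (auto simp: c_def Z_def)
    then show ?thesis using \<open>c < Z\<close> by simp
  qed
  moreover have "0 < c - 1" using p by (simp add: c_def)
  ultimately show ?thesis
    using mult_pos_pos unfolding Vdot_def c_def[symmetric] Z_def[symmetric] \<open>r c = R (snd p) c\<close>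
    by (metis mult.assoc)
qed

lemma V_has_real_derivative:
  assumes sol: "is_solution F \<gamma>" and dom: "\<gamma> t \<in> V_domain"
  shows "((\<lambda>s. V (\<gamma> s)) has_real_derivative Vdot (\<gamma> t)) (at t)"
proof -
  note p = V_domainD[OF dom]
  define y c Z where "y = snd (\<gamma> t)" and "c = ccoord (\<gamma> t)" and "Z = zcoord (\<gamma> t)"
  have dc: "((\<lambda>s. ccoord (\<gamma> s)) has_real_derivative (c - 1) * (Z - c)) (at t)"
    using ccoord_has_real_derivative[OF sol] p by (simp add: c_def Z_def)
  have dZ: "((\<lambda>s. zcoord (\<gamma> s)) has_real_derivative zvel y Z) (at t)"
    using zcoord_has_real_derivative[OF sol] p by (simp add: y_def Z_def)
  have dG: "((\<lambda>s. G (ccoord (\<gamma> s))) has_real_derivative r c * ((c - 1) * (Z - c))) (at t)"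
    by (rule DERIV_chain2[OF _ dc]) (use G_has_real_derivative p in \<open>simp add: c_def\<close>)
  have dM: "((\<lambda>s. M (zcoord (\<gamma> s))) has_real_derivative Z * phi Z * zvel y Z) (at t)"
    by (rule DERIV_chain2[OF _ dZ])
      (use p in \<open>auto intro!: derivative_eq_intros simp: M_def phi_def Z_def field_simps\<close>)
  have dL: "((\<lambda>s. Lambda (zcoord (\<gamma> s))) has_real_derivative phi Z * zvel y Z) (at t)"
    by (rule DERIV_chain2[OF _ dZ])
      (use p in \<open>auto intro!: derivative_eq_intros simp: Lambda_def phi_def Z_def\<close>)
  have "((\<lambda>s. V (\<gamma> s)) has_real_derivative
      r c * ((c - 1) * (Z - c)) - Z * phi Z * zvel y Z
      + ((c - 1) * (Z - c) * Lambda Z + phi Z * zvel y Z * c)) (at t)"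
    using DERIV_add[OF DERIV_diff[OF dG dM] DERIV_mult[OF dc dL]]
    unfolding V_def c_def[symmetric] Z_def[symmetric] .
  moreover have "phi Z * zvel y Z = (c - 1) * (R y Z + Lambda Z)"
    using p by (simp add: R_def y_def c_def ccoord_def field_simps)
  ultimately show ?thesis
    unfolding Vdot_def y_def[symmetric] c_def[symmetric] Z_def[symmetric]
    by (simp add: algebra_simps)
qed

lemma Vdot_nonneg: "p \<in> V_domain \<Longrightarrow> 0 \<le> Vdot p"
  using Vdot_pos[of p] by (cases "fst p = 1") (auto simp: Vdot_def zcoord_def ccoord_def)

lemma mono_V_along_solution:
  assumes sol: "is_solution F \<gamma>" and dom: "range \<gamma> \<subseteq> V_domain"
  shows "mono (\<lambda>t. V (\<gamma> t))"
proof (rule monoI)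
  fix s t :: real assume "s \<le> t"
  show "V (\<gamma> s) \<le> V (\<gamma> t)"
  proof (rule DERIV_nonneg_imp_nondecreasing[OF \<open>s \<le> t\<close>])
    fix u
    have "\<gamma> u \<in> V_domain" using dom by blast
    then show "\<exists>d. ((\<lambda>t. V (\<gamma> t)) has_real_derivative d) (at u) \<and> 0 \<le> d"
      using V_has_real_derivative[OF sol] Vdot_nonneg by blast
  qed
qed

lemma solution_constant_if_V_constant:
  assumes sol: "is_solution F \<gamma>" and dom: "range \<gamma> \<subseteq> V_domain"
    and const: "\<And>s. V (\<gamma> s) = V (\<gamma> 0)"
  shows "\<gamma> s = \<gamma> t"
proof -
  have on_line: "fst (\<gamma> u) = 1" for u
  proof -
    have "(\<lambda>s. V (\<gamma> s)) = (\<lambda>s. V (\<gamma> 0))" using const by blast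
    then have "((\<lambda>s. V (\<gamma> s)) has_real_derivative 0) (at u)" by simp
    moreover have "\<gamma> u \<in> V_domain" using dom by blast
    ultimately have "Vdot (\<gamma> u) = 0"
      using DERIV_unique V_has_real_derivative[OF sol] by blast
    then show ?thesis
      by (rule contrapos_pp) (use Vdot_pos[OF \<open>\<gamma> u \<in> V_domain\<close>] in simp)
  qed
  moreover have "snd (\<gamma> s) = snd (\<gamma> t)"
    by (rule DERIV_isconst_all[of "\<lambda>t. snd (\<gamma> t)"])
      (use is_solution_has_real_derivative(2)[OF sol] on_line in \<open>simp add: vfield_def\<close>)
  ultimately show ?thesis using on_line by (simp add: prod_eq_iff)
qed

lemma equilibrium_in_V_domain:
  assumes "equilibrium F p" "p \<in> open_triangle"
  shows "p \<in> V_domain"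
proof -
  have "(fst p - 1) * snd p = 0" "0 < snd p"
    using assms by (auto simp: equilibrium_def vfield_def open_triangle_def zero_prod_def)
  then show ?thesis using V_domain_if_fst_eq_1 assms(2) by simp
qed

lemma snd_extremum_in_V_domain:
  assumes sol: "is_solution F \<gamma>" and tri: "range \<gamma> \<subseteq> open_triangle"
    and extremum: "(\<forall>r. snd (\<gamma> s) \<le> snd (\<gamma> r)) \<or> (\<forall>r. snd (\<gamma> r) \<le> snd (\<gamma> s))"
  shows "\<gamma> s \<in> V_domain"
proof -
  have d: "((\<lambda>t. snd (\<gamma> t)) has_real_derivative (fst (\<gamma> s) - 1) * snd (\<gamma> s)) (at s)"
    using is_solution_has_real_derivative(2)[OF sol] by (simp add: vfield_def)
  have "(fst (\<gamma> s) - 1) * snd (\<gamma> s) = 0"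
    using extremum DERIV_local_min[OF d, of 1] DERIV_local_max[OF d, of 1] by auto
  moreover have "0 < snd (\<gamma> s)" using tri by (auto simp: open_triangle_def)
  ultimately show ?thesis
    by (intro V_domain_if_fst_eq_1) (use tri in auto)
qed

lemma no_periodic_solution:
  assumes "periodic_solution F \<gamma>" and tri: "range \<gamma> \<subseteq> open_triangle"
  shows False
proof -
  obtain T where "0 < T" and per: "\<And>t. \<gamma> (t + T) = \<gamma> t"
    and sol: "is_solution F \<gamma>" and nonconst: "\<exists>s t. \<gamma> s \<noteq> \<gamma> t"
    using assms(1) unfolding periodic_solution_def by blast
  have cont: "continuous_on UNIV (\<lambda>t. snd (\<gamma> t))"
    using is_solution_continuous_on[OF sol] by (rule continuous_on_snd)
  have per_snd: "\<And>t. snd (\<gamma> (t + T)) = snd (\<gamma> t)" using per by simp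
  obtain s0 where s0: "\<forall>t. snd (\<gamma> s0) \<le> snd (\<gamma> t)"
    using periodic_continuous_attains_inf[OF cont \<open>0 < T\<close> per_snd] ..
  obtain s1 where s1: "\<forall>t. snd (\<gamma> t) \<le> snd (\<gamma> s1)"
    using periodic_continuous_attains_sup[OF cont \<open>0 < T\<close> per_snd] ..
  have "\<gamma> s0 \<in> V_domain" "\<gamma> s1 \<in> V_domain"
    using snd_extremum_in_V_domain[OF sol tri] s0 s1 by simp_all
  then have "\<gamma> t \<in> V_domain" for t
    using V_domain_between[of "\<gamma> t"] s0 s1 tri by blast
  then have dom: "range \<gamma> \<subseteq> V_domain" by blast
  have "V (\<gamma> s) = V (\<gamma> 0)" for s
    using periodic_mono_imp_constant[OF mono_V_along_solution[OF sol dom] \<open>0 < T\<close>] per by simp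
  then show False using solution_constant_if_V_constant[OF sol dom] nonconst by blast
qed

lemma isCont_V:
  assumes "p \<in> V_domain"
  shows "isCont V p"
proof -
  note p = V_domainD[OF assms]
  have c: "isCont ccoord p" and z: "isCont zcoord p"
    using p unfolding ccoord_def zcoord_def by (auto intro!: continuous_intros)
  have "isCont G (ccoord p)"
    using G_has_real_derivative[OF p(5)] by (rule DERIV_isCont)
  moreover have "isCont M (zcoord p)" "isCont Lambda (zcoord p)"
    using p unfolding M_def Lambda_def by (auto intro!: continuous_intros)
  ultimately show ?thesis
    unfolding V_def using c z by (intro continuous_intros isCont_o2[OF c] isCont_o2[OF z])
qed

lemma connecting_orbit_in_V_domain:
  assumes orbit: "connecting_orbit F \<gamma> p q" and tri: "range \<gamma> \<subseteq> open_triangle"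
    and "p \<in> open_triangle" "q \<in> open_triangle"
  shows "range \<gamma> \<subseteq> V_domain"
proof -
  have sol: "is_solution F \<gamma>"
    and lim_p: "((\<lambda>t. snd (\<gamma> t)) \<longlongrightarrow> snd p) at_bot"
    and lim_q: "((\<lambda>t. snd (\<gamma> t)) \<longlongrightarrow> snd q) at_top"
    using orbit unfolding connecting_orbit_def by (auto intro: tendsto_snd)
  have "p \<in> V_domain" "q \<in> V_domain"
    using orbit assms(3,4) unfolding connecting_orbit_def by (auto intro: equilibrium_in_V_domain)
  have cont: "continuous_on UNIV (\<lambda>t. snd (\<gamma> t))"
    using is_solution_continuous_on[OF sol] by (rule continuous_on_snd)
  have "\<gamma> t \<in> V_domain" for t
  proof -
    obtain a where "a \<in> V_domain" "snd a \<le> snd (\<gamma> t)"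
    proof (cases "snd (\<gamma> t) < snd p \<and> snd (\<gamma> t) < snd q")
      case True
      then obtain s where "\<forall>r. snd (\<gamma> s) \<le> snd (\<gamma> r)"
        using continuous_attains_inf_below_limits[OF cont lim_p lim_q] by blast
      then show ?thesis using that snd_extremum_in_V_domain[OF sol tri] by blast
    qed (use that \<open>p \<in> V_domain\<close> \<open>q \<in> V_domain\<close> in \<open>meson not_less\<close>)
    moreover obtain b where "b \<in> V_domain" "snd (\<gamma> t) \<le> snd b"
    proof (cases "snd p < snd (\<gamma> t) \<and> snd q < snd (\<gamma> t)")
      case True
      then obtain s where "\<forall>r. snd (\<gamma> r) \<le> snd (\<gamma> s)"
        using continuous_attains_sup_above_limits[OF cont lim_p lim_q] by blast
      then show ?thesis using that snd_extremum_in_V_domain[OF sol tri] by blast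
    qed (use that \<open>p \<in> V_domain\<close> \<open>q \<in> V_domain\<close> in \<open>meson not_less\<close>)
    ultimately show ?thesis using V_domain_between tri by blast
  qed
  then show ?thesis by blast
qed

lemma V_increases_along_connecting_orbit:
  assumes orbit: "connecting_orbit F \<gamma> p q" and tri: "range \<gamma> \<subseteq> open_triangle"
    and "p \<in> open_triangle" "q \<in> open_triangle"
  shows "V p < V q"
proof -
  have sol: "is_solution F \<gamma>" and lim_p: "(\<gamma> \<longlongrightarrow> p) at_bot" and lim_q: "(\<gamma> \<longlongrightarrow> q) at_top"
    and nonconst: "\<exists>s t. \<gamma> s \<noteq> \<gamma> t"
    using orbit unfolding connecting_orbit_def by auto
  have dom: "range \<gamma> \<subseteq> V_domain" using connecting_orbit_in_V_domain assms by blast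
  have "p \<in> V_domain" "q \<in> V_domain"
    using orbit assms(3,4) unfolding connecting_orbit_def by (auto intro: equilibrium_in_V_domain)
  note mono = monoD[OF mono_V_along_solution[OF sol dom]]
  have "V p \<le> V (\<gamma> t)" for t
  proof (rule tendsto_upperbound[OF isCont_tendsto_compose[OF isCont_V lim_p]])
    show "\<forall>\<^sub>F s in at_bot. V (\<gamma> s) \<le> V (\<gamma> t)"
      unfolding eventually_at_bot_linorder using mono by blast
  qed (use \<open>p \<in> V_domain\<close> in auto)
  moreover have "V (\<gamma> t) \<le> V q" for t
  proof (rule tendsto_lowerbound[OF isCont_tendsto_compose[OF isCont_V lim_q]])
    show "\<forall>\<^sub>F s in at_top. V (\<gamma> t) \<le> V (\<gamma> s)"
      unfolding eventually_at_top_linorder using mono by blast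
  qed (use \<open>q \<in> V_domain\<close> in auto)
  ultimately have "V p = V q \<Longrightarrow> V (\<gamma> s) = V (\<gamma> 0)" for s
    by (metis order_antisym)
  then show ?thesis
    using solution_constant_if_V_constant[OF sol dom] nonconst
      \<open>V p \<le> V (\<gamma> 0)\<close> \<open>V (\<gamma> 0) \<le> V q\<close> by force
qed

lemma no_homoclinic_loop:
  assumes "homoclinic_loop F S" "S \<subseteq> open_triangle"
  shows False
proof -
  obtain \<gamma> p where "connecting_orbit F \<gamma> p p" "S = insert p (range \<gamma>)"
    using assms(1) unfolding homoclinic_loop_def by blast
  then have "V p < V p"
    using V_increases_along_connecting_orbit assms(2) by blast
  then show False by simp
qed

lemma no_oriented_phase_polygon:
  assumes "oriented_phase_polygon F S" "S \<subseteq> open_triangle"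
  shows False
proof -
  obtain n p \<gamma> where "2 \<le> n"
    and orbits: "\<And>i. i < n \<Longrightarrow> connecting_orbit F (\<gamma> i) (p i) (p (Suc i mod n))"
    and S: "S = p ` {..<n} \<union> (\<Union>i<n. range (\<gamma> i))"
    using assms(1) unfolding oriented_phase_polygon_def by blast
  have "V (p i) < V (p (Suc i mod n))" if "i < n" for i
  proof (rule V_increases_along_connecting_orbit[OF orbits[OF that]])
    have "Suc i mod n < n" using that by simp
    then show "range (\<gamma> i) \<subseteq> open_triangle" "p i \<in> open_triangle" "p (Suc i mod n) \<in> open_triangle"
      using assms(2) that unfolding S by auto
  qed
  then show False
    using no_increasing_cycle[of n "\<lambda>i. V (p i)"] \<open>2 \<le> n\<close> by simp
qed

end

lemma compatible_triangle_if_f_compatible: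
  assumes "smooth_on_nonneg f0" "smooth_on_nonneg f1" "smooth_on_nonneg f2"
    and "f_compatible f0 f1 f2 \<beta>"
  shows "compatible_triangle f0 f1 f2 (fst \<beta>) (snd \<beta>)"
proof
  show "continuous_on {0<..<1} f0" "continuous_on {0<..<1} f1" "continuous_on {0<..<1} f2"
    using assms(1-3) by (auto intro: continuous_on_subset dest!: smooth_on_nonneg_continuous_on)
  show "snd \<beta> < fst \<beta>" "snd \<beta> \<le> lam f0" "lam f0 \<le> fst \<beta>"
    using assms(4) unfolding f_compatible_def by auto
  fix I :: real assume "0 < I" "I < 1"
  then have "0 \<le> hf f0 f1 f2 (fst \<beta>) I / (snd \<beta> - fst \<beta>)"
    "0 \<le> hf f0 f1 f2 (snd \<beta>) I / (fst \<beta> - snd \<beta>)"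
    using assms(4) unfolding f_compatible_def by auto
  then show "hf f0 f1 f2 (fst \<beta>) I \<le> 0" "0 \<le> hf f0 f1 f2 (snd \<beta>) I"
    using \<open>snd \<beta> < fst \<beta>\<close> by (auto simp: zero_le_divide_iff)
qed

theorem theorem4p9:
  fixes f0 f1 f2 :: "real \<Rightarrow> real" and \<beta> :: "real \<times> real"
  assumes "smooth_on_nonneg f0" and "smooth_on_nonneg f1" and "smooth_on_nonneg f2"
    and "f_compatible f0 f1 f2 \<beta>"
  shows "\<not> (\<exists>\<gamma>. periodic_solution (vfield f0 f1 f2) \<gamma> \<and>
                 range \<gamma> \<subseteq> interior (triangle \<beta>)) \<and>
    \<not> (\<exists>S. homoclinic_loop (vfield f0 f1 f2) S \<and> S \<subseteq> interior (triangle \<beta>)) \<and>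
    \<not> (\<exists>S. oriented_phase_polygon (vfield f0 f1 f2) S \<and> S \<subseteq> interior (triangle \<beta>))"
proof -
  interpret compatible_triangle f0 f1 f2 "fst \<beta>" "snd \<beta>"
    using compatible_triangle_if_f_compatible assms by blast
  have "interior (triangle \<beta>) \<subseteq> open_triangle"
    using interior_triangle_subset by simp
  then show ?thesis
    using no_periodic_solution no_homoclinic_loop no_oriented_phase_polygon by blast
qed

end
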